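(* Let $(\mathcal R,\tau)$ be a t-minimal Hausdorff geometric structure and $\mathcal S$ a lore of $(\mathcal R,\tau)$. Let $X$ be a definable set, and suppose that for some $n$, $X$ admits an open cover by loric $n$-manifolds. Then $n=\dim(X)$, and hence $X$ is a loric $n$-manifold.
   Context: A structure $\mathcal R$ is geometric if $\operatorname{acl}$ satisfies exchange and $\mathcal R$ eliminates $\exists^\infty$; $\dim$ denotes acl-dimension, and $a\in X$ is generic over $A$ if $\dim(a/A)=\dim(X)$. "Definable" allows parameters. Given a topology $\tau$ on $R$ (extended to definable subsets of $R^n$ by product and subspace topologies), $(\mathcal R,\tau)$ is a Hausdorff geometric structure if: (1) $\tau$ is Hausdorff; (2) $\mathcal R$ is geometric and $\aleph_1$-saturated; (3) if $X\subset R^n$ is $A$-definable and $a\in\overline{\overline X-X}$ then $\dim(a/A)<\dim(X)$; (4) if $X$ is definable over a countable $A$, $a\in X$ generic over $A$, and $B\supseteq A$ countable, every neighborhood of $a$ contains a generic of $X$ over $B$; (5) if $X,Y$, $Z\subset X\times Y$ are $A$-definable of the same dimension with both projections of $Z$ finite-to-one and $(x,y)\in Z$ generic over $A$, then $Z$ restricted to some $U\times V$ ($U\ni x$, $V\ni y$ open) is the graph of a homeomorphism $U\to V$. It is t-minimal if moreover $\tau$ has a basis given by the instances of a parameter-free formula, and $R$ has no isolated points. A lore is a collection $\mathcal S$ of definable sets ("loric sets") such that: (i) $R$ and the diagonal of $R^2$ are loric, and loric sets are closed under finite products, finite intersections, coordinate permutations; (ii) if $f:X\to Y$ is a definable homeomorphism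 with $X$ and the graph of $f$ loric, then $Y$ is loric; (iii) definable open subsets of loric sets are loric, and a definable set with an open cover by loric sets is loric; (iv) every nonempty $A$-definable $X$ has a relatively open $A$-definable loric subset $X'$ with $\dim(X-X')<\dim(X)$. A loric map is a continuous function with loric graph; a loric homeomorphism is a loric map that is a homeomorphism. For definable $X$ with $\dim(X)=n$, $x\in X$ is a loric manifold point if some definable relatively open $U$ with $x\in U\subset X$ is lorically homeomorphic to an open subset of $R^n$; $X^{lman}$ is the set of such points. A loric $n$-manifold is a definable set $Y$ with $\dim(Y)=n$ and $Y^{lman}=Y$. *)

theory Defs
  imports "HOL-Analysis.Analysis"
begin

text \<open>Variables are de Bruijn indices into an environment list; Ex binds index 0.
  Atoms mentioning a variable outside the environment are false (so no hidden parameters).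
  Constants and functions are encoded via parameters / graphs of relations.\<close>

datatype 'r fm = Rel 'r "nat list" | Eq nat nat | Neg "'r fm" | Conj "'r fm" "'r fm" | Ex "'r fm"

type_synonym ('r, 'a) struct = "'r \<Rightarrow> 'a list \<Rightarrow> bool"

fun sat :: "('r, 'a) struct \<Rightarrow> 'r fm \<Rightarrow> 'a list \<Rightarrow> bool" where
  "sat M (Rel r vs) e = ((\<forall>i\<in>set vs. i < length e) \<and> M r (map (\<lambda>i. e ! i) vs))"
| "sat M (Eq i j) e = (i < length e \<and> j < length e \<and> e ! i = e ! j)"
| "sat M (Neg \<phi>) e = (\<not> sat M \<phi> e)"
| "sat M (Conj \<phi> \<psi>) e = (sat M \<phi> e \<and> sat M \<psi> e)"
| "sat M (Ex \<phi>) e = (\<exists>x. sat M \<phi> (x # e))"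

text \<open>Points of R^n are lists of length n.\<close>
definition lenset :: "nat \<Rightarrow> 'a list set" where
  "lenset n = {xs. length xs = n}"

definition defin :: "('r, 'a) struct \<Rightarrow> 'a set \<Rightarrow> nat \<Rightarrow> 'a list set \<Rightarrow> bool" where
  "defin M A n X \<longleftrightarrow> (\<exists>\<phi> ps. set ps \<subseteq> A \<and> X = {xs. length xs = n \<and> sat M \<phi> (xs @ ps)})"

definition definable :: "('r, 'a) struct \<Rightarrow> 'a list set \<Rightarrow> bool" where
  "definable M X \<longleftrightarrow> (\<exists>n. defin M UNIV n X)"

definition acl :: "('r, 'a) struct \<Rightarrow> 'a set \<Rightarrow> 'a set" where
  "acl M A = {a. \<exists>F. defin M A 1 F \<and> finite F \<and> [a] \<in> F}"

definition dimt :: "('r, 'a) struct \<Rightarrow> 'a list \<Rightarrow> 'a set \<Rightarrow> nat" where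
  "dimt M a A = (LEAST k. \<exists>B. B \<subseteq> set a \<and> card B = k \<and> set a \<subseteq> acl M (A \<union> B))"

text \<open>dim(X) of a definable set: the maximum of dim(a/A) for a in X, A a small (countable)
  set of parameters over which X is definable; -1 (i.e. minus infinity) for the empty set.\<close>
definition dim :: "('r, 'a) struct \<Rightarrow> 'a list set \<Rightarrow> int" where
  "dim M X = (if X = {} then -1 else
     int (GREATEST k. \<exists>A a. countable A \<and> (\<exists>n. defin M A n X) \<and> a \<in> X \<and> dimt M a A = k))"

definition Rn :: "'a topology \<Rightarrow> nat \<Rightarrow> 'a list topology" where
  "Rn \<tau> n = pullback_topology (lenset n) (\<lambda>xs. restrict (\<lambda>i. xs ! i) {..<n})
              (product_topology (\<lambda>_. \<tau>) {..<n})"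

definition graph :: "('a list \<Rightarrow> 'a list) \<Rightarrow> 'a list set \<Rightarrow> 'a list set" where
  "graph f X = {x @ f x | x. x \<in> X}"

definition geometric :: "('r, 'a) struct \<Rightarrow> bool" where
  "geometric M \<longleftrightarrow>
     (\<forall>A a b. a \<in> acl M (insert b A) \<and> a \<notin> acl M A \<longrightarrow> b \<in> acl M (insert a A)) \<and>
     (\<forall>\<phi> m. \<exists>N::nat. \<forall>b. length b = m \<longrightarrow> finite {a. sat M \<phi> (a # b)} \<longrightarrow>
         card {a. sat M \<phi> (a # b)} \<le> N)"

definition aleph1_saturated :: "('r, 'a) struct \<Rightarrow> bool" where
  "aleph1_saturated M \<longleftrightarrow>
     (\<forall>A (\<Sigma> :: ('r fm \<times> 'a list) set). countable A \<longrightarrow> (\<forall>(\<phi>, ps)\<in>\<Sigma>. set ps \<subseteq> A) \<longrightarrow>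
        (\<forall>F. F \<subseteq> \<Sigma> \<and> finite F \<longrightarrow> (\<exists>a. \<forall>(\<phi>, ps)\<in>F. sat M \<phi> (a # ps))) \<longrightarrow>
        (\<exists>a. \<forall>(\<phi>, ps)\<in>\<Sigma>. sat M \<phi> (a # ps)))"

definition hausdorff_geometric :: "('r, 'a) struct \<Rightarrow> 'a topology \<Rightarrow> bool" where
  "hausdorff_geometric M \<tau> \<longleftrightarrow>
     topspace \<tau> = UNIV \<and> Hausdorff_space \<tau> \<and>
     geometric M \<and> aleph1_saturated M \<and>
     (\<forall>A n X a. defin M A n X \<and> a \<in> (Rn \<tau> n) closure_of ((Rn \<tau> n) closure_of X - X)
        \<longrightarrow> int (dimt M a A) < dim M X) \<and>
     (\<forall>A B n X a U. countable A \<and> countable B \<and> A \<subseteq> B \<and> defin M A n X \<and> a \<in> X \<and>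
        int (dimt M a A) = dim M X \<and> openin (Rn \<tau> n) U \<and> a \<in> U
        \<longrightarrow> (\<exists>b \<in> X \<inter> U. int (dimt M b B) = dim M X)) \<and>
     (\<forall>A n m X Y Z x y. defin M A n X \<and> defin M A m Y \<and> defin M A (n + m) Z \<and>
        dim M X = dim M Y \<and> dim M Y = dim M Z \<and>
        Z \<subseteq> {u @ v | u v. u \<in> X \<and> v \<in> Y} \<and>
        (\<forall>u\<in>X. finite {v \<in> Y. u @ v \<in> Z}) \<and> (\<forall>v\<in>Y. finite {u \<in> X. u @ v \<in> Z}) \<and>
        x \<in> X \<and> y \<in> Y \<and> x @ y \<in> Z \<and> int (dimt M (x @ y) A) = dim M Z
        \<longrightarrow> (\<exists>U V f. openin (subtopology (Rn \<tau> n) X) U \<and> x \<in> U \<and>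
                 openin (subtopology (Rn \<tau> m) Y) V \<and> y \<in> V \<and>
                 homeomorphic_map (subtopology (Rn \<tau> n) U) (subtopology (Rn \<tau> m) V) f \<and>
                 {p \<in> Z. take n p \<in> U \<and> drop n p \<in> V} = graph f U))"

definition t_minimal :: "('r, 'a) struct \<Rightarrow> 'a topology \<Rightarrow> bool" where
  "t_minimal M \<tau> \<longleftrightarrow> hausdorff_geometric M \<tau> \<and>
     (\<exists>\<phi> m. (\<forall>b. length b = m \<longrightarrow> openin \<tau> {a. sat M \<phi> (a # b)}) \<and>
            (\<forall>U x. openin \<tau> U \<and> x \<in> U \<longrightarrow>
               (\<exists>b. length b = m \<and> x \<in> {a. sat M \<phi> (a # b)} \<and> {a. sat M \<phi> (a # b)} \<subseteq> U))) \<and>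
     (\<forall>a. \<not> openin \<tau> {a})"

definition lore :: "('r, 'a) struct \<Rightarrow> 'a topology \<Rightarrow> 'a list set set \<Rightarrow> bool" where
  "lore M \<tau> S \<longleftrightarrow>
     (\<forall>X\<in>S. definable M X) \<and>
     lenset 1 \<in> S \<and> {[a, a] | a. True} \<in> S \<and>
     (\<forall>X\<in>S. \<forall>Y\<in>S. {x @ y | x y. x \<in> X \<and> y \<in> Y} \<in> S) \<and>
     (\<forall>X\<in>S. \<forall>Y\<in>S. X \<inter> Y \<in> S) \<and>
     (\<forall>X n \<sigma>. X \<in> S \<and> X \<subseteq> lenset n \<and> \<sigma> permutes {..<n} \<longrightarrow>
        (\<lambda>xs. map (\<lambda>i. xs ! \<sigma> i) [0..<n]) ` X \<in> S) \<and>
     (\<forall>X Y f n m. X \<subseteq> lenset n \<and> Y \<subseteq> lenset m \<and> X \<in> S \<and> graph f X \<in> S \<and>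
        homeomorphic_map (subtopology (Rn \<tau> n) X) (subtopology (Rn \<tau> m) Y) f \<longrightarrow> Y \<in> S) \<and>
     (\<forall>X U n. X \<in> S \<and> X \<subseteq> lenset n \<and> definable M U \<and>
        openin (subtopology (Rn \<tau> n) X) U \<longrightarrow> U \<in> S) \<and>
     (\<forall>X n \<U>. definable M X \<and> X \<subseteq> lenset n \<and> \<U> \<subseteq> S \<and>
        (\<forall>U\<in>\<U>. openin (subtopology (Rn \<tau> n) X) U) \<and> \<Union>\<U> = X \<longrightarrow> X \<in> S) \<and>
     (\<forall>A n X. defin M A n X \<and> X \<noteq> {} \<longrightarrow>
        (\<exists>X'. defin M A n X' \<and> X' \<in> S \<and> X' \<subseteq> X \<and>
              openin (subtopology (Rn \<tau> n) X) X' \<and> dim M (X - X') < dim M X))"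

definition lman :: "('r, 'a) struct \<Rightarrow> 'a topology \<Rightarrow> 'a list set set \<Rightarrow> 'a list set \<Rightarrow> 'a list set" where
  "lman M \<tau> S X = {x \<in> X. \<exists>k n. X \<subseteq> lenset k \<and> dim M X = int n \<and>
      (\<exists>U V f. definable M U \<and> openin (subtopology (Rn \<tau> k) X) U \<and> x \<in> U \<and>
         openin (Rn \<tau> n) V \<and>
         homeomorphic_map (subtopology (Rn \<tau> k) U) (subtopology (Rn \<tau> n) V) f \<and>
         graph f U \<in> S)}"

definition loric_manifold :: "('r, 'a) struct \<Rightarrow> 'a topology \<Rightarrow> 'a list set set \<Rightarrow> nat \<Rightarrow> 'a list set \<Rightarrow> bool" where
  "loric_manifold M \<tau> S n Y \<longleftrightarrow> definable M Y \<and> dim M Y = int n \<and> lman M \<tau> S Y = Y"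

end

theory Submission
  imports Defs
begin

text \<open>A point of X that is generic over a countable parameter set lies in some member U of the
  cover; by axiom (4) of Hausdorff geometric structures a neighbourhood of it contains a point of X
  that is generic even over the parameters of U, so dim X \<le> dim U = n. Conversely the same axiom,
  applied to the whole space, shows dim U \<le> dim X for definable U \<subseteq> X. Being a loric manifold
  point is local, and relatively open subsets of the same dimension inherit the charts.\<close>

lemma mem_acl: "x \<in> C \<Longrightarrow> x \<in> acl M C"
proof -
  assume x: "x \<in> C"
  have "{[x]} = {xs. length xs = 1 \<and> sat M (Eq 0 1) (xs @ [x])}"
    by (auto simp: length_Suc_conv)
  then have "defin M C 1 {[x]}"
    unfolding defin_def using x by (intro exI[of _ "Eq 0 1"] exI[of _ "[x]"]) auto
  then show ?thesis
    unfolding acl_def by auto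
qed

lemma dimt_le_length: "dimt M a A \<le> length a"
proof -
  have "\<exists>B. B \<subseteq> set a \<and> card B = card (set a) \<and> set a \<subseteq> acl M (A \<union> B)"
    by (intro exI[of _ "set a"]) (auto intro: mem_acl)
  then have "dimt M a A \<le> card (set a)"
    unfolding dimt_def by (rule Least_le)
  then show ?thesis
    using card_length le_trans by blast
qed

lemma defin_mono: "defin M A n X \<Longrightarrow> A \<subseteq> B \<Longrightarrow> defin M B n X"
  unfolding defin_def by blast

lemma defin_length: "defin M A n X \<Longrightarrow> a \<in> X \<Longrightarrow> length a = n"
  unfolding defin_def by auto

lemma definable_imp_defin_list: "definable M X \<Longrightarrow> \<exists>ps n. defin M (set ps) n X"
  unfolding definable_def defin_def by blast

lemma topspace_Rn: "topspace \<tau> = UNIV \<Longrightarrow> topspace (Rn \<tau> n) = lenset n"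
  unfolding Rn_def topspace_pullback_topology topspace_product_topology by auto

lemma dim_nonempty:
  assumes "X \<noteq> {}"
  shows "dim M X = int (GREATEST j. \<exists>A a. countable A \<and> (\<exists>n. defin M A n X) \<and> a \<in> X \<and> dimt M a A = j)"
  using assms unfolding dim_def by simp

lemma dimt_bounded_by_defin:
  assumes "defin M A n X" "a \<in> X"
  shows "dimt M a B \<le> n"
  using dimt_le_length[of M a B] defin_length[OF assms] by simp

lemma dimt_le_dim:
  assumes "countable A" "defin M A n X" "a \<in> X"
  shows "int (dimt M a A) \<le> dim M X"
proof -
  let ?P = "\<lambda>j. \<exists>A a. countable A \<and> (\<exists>n. defin M A n X) \<and> a \<in> X \<and> dimt M a A = j"
  have "?P (dimt M a A)"
    using assms by blast
  moreover have "\<And>j. ?P j \<Longrightarrow> j \<le> n"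
    using dimt_bounded_by_defin[OF assms(2)] by blast
  ultimately have "dimt M a A \<le> (GREATEST j. ?P j)"
    by (rule Greatest_le_nat)
  moreover have "dim M X = int (GREATEST j. ?P j)"
    using assms(3) by (intro dim_nonempty) blast
  ultimately show ?thesis
    by simp
qed

lemma ex_generic:
  assumes "definable M X" "X \<noteq> {}"
  obtains A a n where "countable A" "defin M A n X" "a \<in> X" "int (dimt M a A) = dim M X"
proof -
  let ?P = "\<lambda>j. \<exists>A a. countable A \<and> (\<exists>n. defin M A n X) \<and> a \<in> X \<and> dimt M a A = j"
  obtain ps n where X: "defin M (set ps) n X"
    using definable_imp_defin_list[OF assms(1)] by blast
  obtain b where "b \<in> X"
    using assms(2) by blast
  then have "?P (dimt M b (set ps))"
    using X countable_finite[OF finite_set[of ps]] by blast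
  moreover have "\<And>j. ?P j \<Longrightarrow> j \<le> n"
    using dimt_bounded_by_defin[OF X] by blast
  ultimately have "?P (GREATEST j. ?P j)"
    by (rule GreatestI_nat)
  then obtain A a n where "countable A" "defin M A n X" "a \<in> X" "dimt M a A = (GREATEST j. ?P j)"
    by blast
  moreover have "dim M X = int (GREATEST j. ?P j)"
    using assms(2) by (rule dim_nonempty)
  ultimately show ?thesis
    using that by simp
qed

lemma generic_in_openin:
  assumes "hausdorff_geometric M \<tau>" "countable A" "countable B" "A \<subseteq> B" "defin M A n X"
    and "a \<in> X" "int (dimt M a A) = dim M X" "openin (Rn \<tau> n) U" "a \<in> U"
  obtains b where "b \<in> X \<inter> U" "int (dimt M b B) = dim M X"
proof -
  have "\<forall>A B n X a U. countable A \<and> countable B \<and> A \<subseteq> B \<and> defin M A n X \<and> a \<in> X \<and>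
      int (dimt M a A) = dim M X \<and> openin (Rn \<tau> n) U \<and> a \<in> U
      \<longrightarrow> (\<exists>b \<in> X \<inter> U. int (dimt M b B) = dim M X)"
    using assms(1) unfolding hausdorff_geometric_def by (elim conjE)
  then have "\<exists>b \<in> X \<inter> U. int (dimt M b B) = dim M X"
    by (rule allE[of _ A], elim allE[of _ B] allE[of _ n] allE[of _ X] allE[of _ a] allE[of _ U] mp)
      (intro conjI assms(2-))
  then show ?thesis
    using that by blast
qed

lemma dim_mono:
  assumes "hausdorff_geometric M \<tau>" "definable M X" "definable M Y" "Y \<subseteq> X"
  shows "dim M Y \<le> dim M X"
proof (cases "Y = {}")
  case True
  then show ?thesis
    by (simp add: dim_def)
next
  case False
  obtain A a n where A: "countable A" "defin M A n Y" "a \<in> Y" "int (dimt M a A) = dim M Y"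
    using ex_generic[OF assms(3) False] .
  obtain ps m where X: "defin M (set ps) m X"
    using definable_imp_defin_list[OF assms(2)] by blast
  have countable_B: "countable (A \<union> set ps)"
    using A(1) countable_finite[OF finite_set[of ps]] by simp
  have "a \<in> topspace (Rn \<tau> n)"
    using assms(1) defin_length[OF A(2,3)]
    by (simp add: hausdorff_geometric_def topspace_Rn lenset_def)
  then obtain b where b: "b \<in> Y" "int (dimt M b (A \<union> set ps)) = dim M Y"
    using generic_in_openin[OF assms(1) A(1) countable_B _ A(2,3,4)] by blast
  have "int (dimt M b (A \<union> set ps)) \<le> dim M X"
    using dimt_le_dim[OF countable_B defin_mono[OF X]] b(1) assms(4) by blast
  then show ?thesis
    using b(2) by simp
qed

lemma dim_le_member_of_openin_cover:
  assumes "hausdorff_geometric M \<tau>" "definable M X" "X \<subseteq> lenset k" "X \<noteq> {}"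
    and "\<forall>U\<in>\<U>. openin (subtopology (Rn \<tau> k) X) U \<and> definable M U" "\<Union>\<U> = X"
  shows "\<exists>U\<in>\<U>. dim M X \<le> dim M U"
proof -
  obtain A a n where A: "countable A" "defin M A n X" "a \<in> X" "int (dimt M a A) = dim M X"
    using ex_generic[OF assms(2,4)] .
  have "n = k"
    using defin_length[OF A(2,3)] A(3) assms(3) by (auto simp: lenset_def)
  obtain U where U: "U \<in> \<U>" "a \<in> U"
    using A(3) assms(6) by blast
  obtain W where W: "openin (Rn \<tau> n) W" "U = W \<inter> X"
    using assms(5) U(1) \<open>n = k\<close> by (auto simp: openin_subtopology)
  obtain ps m where U_defin: "defin M (set ps) m U"
    using definable_imp_defin_list assms(5) U(1) by blast
  have countable_B: "countable (A \<union> set ps)"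
    using A(1) countable_finite[OF finite_set[of ps]] by simp
  obtain b where b: "b \<in> X \<inter> W" "int (dimt M b (A \<union> set ps)) = dim M X"
    using generic_in_openin[OF assms(1) A(1) countable_B _ A(2,3,4) W(1)] U(2) W(2) by blast
  have "int (dimt M b (A \<union> set ps)) \<le> dim M U"
    using dimt_le_dim[OF countable_B defin_mono[OF U_defin]] b(1) W(2) by blast
  then show ?thesis
    using U(1) b(2) by auto
qed

lemma lman_subset_of_openin:
  assumes "X \<subseteq> lenset k" "openin (subtopology (Rn \<tau> k) X) V" "dim M V = dim M X"
  shows "lman M \<tau> S V \<subseteq> lman M \<tau> S X"
proof
  fix x assume "x \<in> lman M \<tau> S V"
  then obtain k' n U W f where chart:
      "x \<in> V" "V \<subseteq> lenset k'" "dim M V = int n" "definable M U"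
      "openin (subtopology (Rn \<tau> k') V) U" "x \<in> U" "openin (Rn \<tau> n) W"
      "homeomorphic_map (subtopology (Rn \<tau> k') U) (subtopology (Rn \<tau> n) W) f"
      "graph f U \<in> S"
    unfolding lman_def by blast
  have V_sub: "V \<subseteq> X"
    using assms(2) by (rule openin_imp_subset)
  have "k' = k"
    using chart(1,2) V_sub assms(1) by (auto simp: lenset_def)
  have "openin (subtopology (subtopology (Rn \<tau> k) X) V) U"
    using chart(5) V_sub \<open>k' = k\<close> by (simp add: subtopology_subtopology Int_absorb1)
  then have "openin (subtopology (Rn \<tau> k) X) U"
    using openin_trans_full assms(2) by blast
  then show "x \<in> lman M \<tau> S X"
    unfolding lman_def
  proof (intro CollectI conjI exI)
    show "x \<in> X"
      using chart(1) V_sub by blast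
    show "dim M X = int n"
      using chart(3) assms(3) by simp
  qed (use chart assms(1) \<open>k' = k\<close> in simp_all)
qed

lemma loric_manifold_of_openin_cover:
  assumes "definable M X" "X \<subseteq> lenset k" "dim M X = int n"
    and "\<forall>U\<in>\<U>. openin (subtopology (Rn \<tau> k) X) U \<and> loric_manifold M \<tau> S n U" "\<Union>\<U> = X"
  shows "loric_manifold M \<tau> S n X"
proof -
  have "X \<subseteq> lman M \<tau> S X"
  proof
    fix x assume "x \<in> X"
    then obtain U where U: "U \<in> \<U>" "x \<in> U"
      using assms(5) by blast
    then have "x \<in> lman M \<tau> S U" "openin (subtopology (Rn \<tau> k) X) U" "dim M U = dim M X"
      using assms(3,4) by (auto simp: loric_manifold_def)
    then show "x \<in> lman M \<tau> S X"
      using lman_subset_of_openin[OF assms(2)] by blast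
  qed
  then show ?thesis
    using assms(1,3) by (auto simp: loric_manifold_def lman_def)
qed

theorem lemma2p18:
  fixes M :: "('r, 'a) struct" and \<tau> :: "'a topology" and S :: "'a list set set"
    and X :: "'a list set" and \<U> :: "'a list set set" and n k :: nat
  assumes "t_minimal M \<tau>"
    and "lore M \<tau> S"
    and "definable M X"
    and "X \<subseteq> lenset k"
    and "X \<noteq> {}"
    and "\<forall>U\<in>\<U>. openin (subtopology (Rn \<tau> k) X) U \<and> loric_manifold M \<tau> S n U"
    and "\<Union>\<U> = X"
  shows "dim M X = int n \<and> loric_manifold M \<tau> S n X"
proof -
  have hg: "hausdorff_geometric M \<tau>"
    using assms(1) by (simp add: t_minimal_def)
  have cover: "\<forall>U\<in>\<U>. openin (subtopology (Rn \<tau> k) X) U \<and> definable M U"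
    using assms(6) by (simp add: loric_manifold_def)
  have "dim M X \<le> int n"
    using dim_le_member_of_openin_cover[OF hg assms(3,4,5) cover assms(7)] assms(6)
    by (auto simp: loric_manifold_def)
  moreover obtain U where "U \<in> \<U>"
    using assms(5,7) by blast
  then have "int n \<le> dim M X"
    using dim_mono[OF hg assms(3), of U] assms(6,7) by (auto simp: loric_manifold_def)
  ultimately have "dim M X = int n"
    by simp
  then show ?thesis
    using loric_manifold_of_openin_cover[OF assms(3,4) _ assms(6,7)] by simp
qed

end
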